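(* Let $a\neq 0$ be a real constant and $f,g$ smooth real functions, and consider the affine factorable surface of the second kind $\phi(x,z)=(x,\,f(x)\,g(z+ax),\,z)$ in $G_3^1$ with $1-(fg')^2>0$. If its mean curvature $H$ vanishes identically, then the surface $y(x,z)=f(x)g(z+ax)$ is one of the following, where $f_o,g_o,b_1,\dots,b_{13}$ are real constants: (1) $y=f_o(b_1(z+ax)+b_2)$, or $y=f_o\left(\sqrt{\frac{a^2-1}{a^2f_o^2}}\,(z+ax)+b_3\right)$; (2) $y=g_o(b_4x+b_5)$; (3) $y=b_8(b_6x+b_7)$, or $y=(b_6x+b_7)(b_9(z+ax)+b_{10})$; (4) $y=(b_{12}x+b_{13})(b_{11}(z+ax)+b_{12})$, or $y=\frac{1}{b_{11}}(b_{11}(z+ax)+b_{12})$.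
   Context: The pseudo-Galilean space $G_3^1$ is $\mathbb{R}^3$ with the scalar product $\langle X,Y\rangle=x_1y_1$ if $x_1\neq0$ or $y_1\neq0$, and $\langle X,Y\rangle=x_2y_2-x_3y_3$ if $x_1=y_1=0$. An affine factorable surface of the second kind is $\phi(x,z)=(x,f(x)g(z+ax),z)$ with $a\neq0$ constant. Here $f'$ denotes $df/dx$ and $g',g''$ denote derivatives of $g$ with respect to its argument $v=z+ax$. The mean curvature of this surface is taken to be $H=\dfrac{\Omega}{2(1-(fg')^2)^{3/2}}$, where $\Omega=(1-a^2)fg''-f''g-2af'g'+f^2f''g'^2g+2af'f^2g'^3+a^2f^3g'^2g''$. *)

theory Defs
  imports "HOL-Analysis.Analysis"
begin

definition smooth_fun :: "(real \<Rightarrow> real) \<Rightarrow> bool" where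
  "smooth_fun f \<longleftrightarrow> (\<forall>n x. ((deriv ^^ n) f) differentiable (at x))"

text \<open>The quantity Omega for the affine factorable surface of the second kind
  phi(x,z) = (x, f(x) g(z + a x), z); here v = z + a x, f' = df/dx, g' = dg/dv.\<close>
definition Omega :: "real \<Rightarrow> (real \<Rightarrow> real) \<Rightarrow> (real \<Rightarrow> real) \<Rightarrow> real \<Rightarrow> real \<Rightarrow> real" where
  "Omega a f g x z =
    (let v = z + a * x; F = f x; F1 = deriv f x; F2 = deriv (deriv f) x;
         G = g v; G1 = deriv g v; G2 = deriv (deriv g) v in
     (1 - a\<^sup>2) * F * G2 - F2 * G - 2 * a * F1 * G1 + F\<^sup>2 * F2 * G1\<^sup>2 * G
     + 2 * a * F1 * F\<^sup>2 * G1 ^ 3 + a\<^sup>2 * F ^ 3 * G1\<^sup>2 * G2)"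

definition mean_curv :: "real \<Rightarrow> (real \<Rightarrow> real) \<Rightarrow> (real \<Rightarrow> real) \<Rightarrow> real \<Rightarrow> real \<Rightarrow> real" where
  "mean_curv a f g x z =
     Omega a f g x z / (2 * (1 - (f x * deriv g (z + a * x))\<^sup>2) powr (3/2))"

end

theory Submission
  imports Defs "HOL-Computational_Algebra.Polynomial"
begin

text \<open>With v = z + a x the vanishing of Omega reads
  (1 - (f g')^2) (g f'' + 2 a f' g' + a^2 f g'') = f g''.
  If g'' vanishes identically, g is affine and the equation forces f to be affine (when g is
  constant) or constant (otherwise). Suppose instead that g''(v) is nonzero near some point
  while f is not identically zero. Dividing by g'' exhibits f(x) / (1 - f(x)^2 t), with
  t = g'(v)^2, as a linear combination of f''(x), f'(x), f(x) whose coefficients depend on v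
  only. For constant f this pins down g'^2, contradicting g'' \<noteq> 0. Otherwise four values of x
  give linearly dependent vectors (f'', f', f)(x) in R^3, and the dependence yields a vanishing
  sum of four simple fractions in t at four distinct values of t; choosing the x with distinct
  nonzero f(x)^2 makes such fractions linearly independent, a contradiction.\<close>

lemma four_vectors_dependent:
  fixes w1 w2 w3 w4 :: "'a::euclidean_space"
  assumes "DIM('a) < 4"
  shows "\<exists>l1 l2 l3 l4. (l1 \<noteq> 0 \<or> l2 \<noteq> 0 \<or> l3 \<noteq> 0 \<or> l4 \<noteq> 0) \<and>
           l1 *\<^sub>R w1 + l2 *\<^sub>R w2 + l3 *\<^sub>R w3 + l4 *\<^sub>R w4 = 0"
proof (cases "distinct [w1, w2, w3, w4]")
  case False
  then consider "w1 = w2" | "w1 = w3" | "w1 = w4" | "w2 = w3" | "w2 = w4" | "w3 = w4"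
    by auto
  then show ?thesis
  proof cases
    case 1 then show ?thesis by (intro exI[of _ 1] exI[of _ "-1"] exI[of _ 0]) simp
  next
    case 2 then show ?thesis by (intro exI[of _ 1] exI[of _ 0] exI[of _ "-1"]) simp
  next
    case 3 then show ?thesis by (intro exI[of _ 1] exI[of _ 0] exI[of _ 0] exI[of _ "-1"]) simp
  next
    case 4 then show ?thesis by (intro exI[of _ 0] exI[of _ 1] exI[of _ "-1"]) simp
  next
    case 5 then show ?thesis by (intro exI[of _ 0] exI[of _ 1] exI[of _ 0] exI[of _ "-1"]) simp
  next
    case 6 then show ?thesis by (intro exI[of _ 0] exI[of _ 0] exI[of _ 1] exI[of _ "-1"]) simp
  qed
next
  case True
  let ?S = "{w1, w2, w3, w4}"
  have "dependent ?S"
    using True assms by (intro dependent_biggerset) simp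
  then obtain t u where t: "finite t" "t \<subseteq> ?S" "(\<Sum>v\<in>t. u v *\<^sub>R v) = 0" "\<exists>v\<in>t. u v \<noteq> 0"
    unfolding dependent_explicit by blast
  define l where "l v = (if v \<in> t then u v else 0)" for v
  have "(\<Sum>v\<in>t. u v *\<^sub>R v) = (\<Sum>v\<in>?S. l v *\<^sub>R v)"
    unfolding l_def using t(1,2) by (intro sum.mono_neutral_cong_left) auto
  also have "\<dots> = l w1 *\<^sub>R w1 + l w2 *\<^sub>R w2 + l w3 *\<^sub>R w3 + l w4 *\<^sub>R w4"
    using True by (simp add: add.assoc)
  finally have combination: "l w1 *\<^sub>R w1 + l w2 *\<^sub>R w2 + l w3 *\<^sub>R w3 + l w4 *\<^sub>R w4 = 0"
    using t(3) by simp
  obtain v where v: "v \<in> t" "u v \<noteq> 0"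
    using t(4) by blast
  have "v = w1 \<or> v = w2 \<or> v = w3 \<or> v = w4"
    using v(1) t(2) by blast
  then have "l w1 \<noteq> 0 \<or> l w2 \<noteq> 0 \<or> l w3 \<noteq> 0 \<or> l w4 \<noteq> 0"
    using v unfolding l_def by auto
  with combination show ?thesis by blast
qed

lemma four_simple_fractions_independent:
  fixes u1 u2 u3 u4 t1 t2 t3 t4 m1 m2 m3 m4 :: real
  assumes u_distinct: "distinct [u1, u2, u3, u4]"
    and u_nonzero: "u1 \<noteq> 0" "u2 \<noteq> 0" "u3 \<noteq> 0" "u4 \<noteq> 0"
    and t_distinct: "distinct [t1, t2, t3, t4]"
    and denom_nonzero: "\<And>u t. u \<in> {u1, u2, u3, u4} \<Longrightarrow> t \<in> {t1, t2, t3, t4} \<Longrightarrow> 1 - u * t \<noteq> 0"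
    and sum_zero: "\<And>t. t \<in> {t1, t2, t3, t4} \<Longrightarrow>
       m1 / (1 - u1 * t) + m2 / (1 - u2 * t) + m3 / (1 - u3 * t) + m4 / (1 - u4 * t) = 0"
  shows "m1 = 0 \<and> m2 = 0 \<and> m3 = 0 \<and> m4 = 0"
proof -
  define p where "p = smult m1 ([:1,-u2:] * [:1,-u3:] * [:1,-u4:])
     + smult m2 ([:1,-u1:] * [:1,-u3:] * [:1,-u4:])
     + smult m3 ([:1,-u1:] * [:1,-u2:] * [:1,-u4:])
     + smult m4 ([:1,-u1:] * [:1,-u2:] * [:1,-u3:])"
  have poly_p: "poly p t = m1*(1-u2*t)*(1-u3*t)*(1-u4*t) + m2*(1-u1*t)*(1-u3*t)*(1-u4*t)
     + m3*(1-u1*t)*(1-u2*t)*(1-u4*t) + m4*(1-u1*t)*(1-u2*t)*(1-u3*t)" for t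
    unfolding p_def by (simp add: algebra_simps)
  have root: "poly p t = 0" if "t \<in> {t1, t2, t3, t4}" for t
  proof -
    have denoms: "1 - u1*t \<noteq> 0" "1 - u2*t \<noteq> 0" "1 - u3*t \<noteq> 0" "1 - u4*t \<noteq> 0"
      using denom_nonzero that by auto
    have cleared: "m1 / (1 - u1 * t) * ((1-u1*t)*(1-u2*t)*(1-u3*t)*(1-u4*t)) = m1*(1-u2*t)*(1-u3*t)*(1-u4*t)"
      "m2 / (1 - u2 * t) * ((1-u1*t)*(1-u2*t)*(1-u3*t)*(1-u4*t)) = m2*(1-u1*t)*(1-u3*t)*(1-u4*t)"
      "m3 / (1 - u3 * t) * ((1-u1*t)*(1-u2*t)*(1-u3*t)*(1-u4*t)) = m3*(1-u1*t)*(1-u2*t)*(1-u4*t)"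
      "m4 / (1 - u4 * t) * ((1-u1*t)*(1-u2*t)*(1-u3*t)*(1-u4*t)) = m4*(1-u1*t)*(1-u2*t)*(1-u3*t)"
      using denoms by simp_all
    have "poly p t = (m1 / (1 - u1 * t) + m2 / (1 - u2 * t) + m3 / (1 - u3 * t)
        + m4 / (1 - u4 * t)) * ((1-u1*t)*(1-u2*t)*(1-u3*t)*(1-u4*t))"
      unfolding poly_p distrib_right cleared ..
    then show ?thesis using sum_zero[OF that] by simp
  qed
  have "degree p \<le> 3"
    unfolding p_def
    by (intro degree_add_le order.trans[OF degree_smult_le] order.trans[OF degree_mult_le]
        add_le_mono; simp)+
  have "p = 0"
  proof (rule ccontr)
    assume "p \<noteq> 0"
    then have "card {x. poly p x = 0} \<le> 3" and "finite {x. poly p x = 0}"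
      using card_poly_roots_bound \<open>degree p \<le> 3\<close> poly_roots_finite by fastforce+
    moreover have "{t1, t2, t3, t4} \<subseteq> {x. poly p x = 0}" using root by auto
    ultimately have "card {t1, t2, t3, t4} \<le> 3" by (meson card_mono order.trans)
    with t_distinct show False by simp
  qed
  \<comment> \<open>evaluating the vanishing numerator at the pole of each fraction isolates its coefficient\<close>
  then have "m1 * ((1 - u2/u1) * (1 - u3/u1) * (1 - u4/u1)) = 0"
    "m2 * ((1 - u1/u2) * (1 - u3/u2) * (1 - u4/u2)) = 0"
    "m3 * ((1 - u1/u3) * (1 - u2/u3) * (1 - u4/u3)) = 0"
    "m4 * ((1 - u1/u4) * (1 - u2/u4) * (1 - u3/u4)) = 0"
    using poly_p[of "1/u1"] poly_p[of "1/u2"] poly_p[of "1/u3"] poly_p[of "1/u4"] u_nonzero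
    by (simp_all add: mult_ac)
  then show ?thesis using u_distinct u_nonzero by (simp; blast)
qed

lemma power2_neq_of_same_sign:
  fixes y z :: real
  assumes "0 < y * z" "y \<noteq> z"
  shows "y\<^sup>2 \<noteq> z\<^sup>2"
  using assms by (auto simp: power2_eq_iff)

lemma continuous_on_segment_distinct_squares:
  fixes h :: "real \<Rightarrow> real"
  assumes cont: "continuous_on (closed_segment p q) h" and ne: "h p \<noteq> h q"
  shows "\<exists>x1 x2 x3 x4. {x1, x2, x3, x4} \<subseteq> closed_segment p q \<and>
     h x1 \<noteq> 0 \<and> h x2 \<noteq> 0 \<and> h x3 \<noteq> 0 \<and> h x4 \<noteq> 0 \<and>
     distinct [(h x1)\<^sup>2, (h x2)\<^sup>2, (h x3)\<^sup>2, (h x4)\<^sup>2]"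
proof -
  obtain L H where LH: "L < H" "{L..H} \<subseteq> closed_segment (h p) (h q)" "0 \<le> L \<or> H \<le> 0"
  proof -
    define lo hi where "lo = min (h p) (h q)" and "hi = max (h p) (h q)"
    have seg: "closed_segment (h p) (h q) = {lo..hi}" and "lo < hi"
      using ne by (auto simp: lo_def hi_def closed_segment_eq_real_ivl)
    show ?thesis
    proof (cases "0 \<le> lo \<or> hi \<le> 0")
      case True
      with that[of lo hi] seg \<open>lo < hi\<close> show ?thesis by simp
    next
      case False
      with that[of 0 hi] seg show ?thesis by simp
    qed
  qed
  define y where "y k = L + real k * (H - L) / 5" for k :: nat
  have y_between: "L < y k \<and> y k < H" if "1 \<le> k" "k \<le> 4" for k
  proof -
    have "0 < real k * (H - L)"
      using that LH(1) by simp
    moreover have "real k * (H - L) < 5 * (H - L)"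
      using that LH(1) by (intro mult_strict_right_mono) auto
    ultimately show ?thesis by (auto simp: y_def field_simps)
  qed
  have "\<exists>x \<in> closed_segment p q. h x = y k" if "1 \<le> k" "k \<le> 4" for k
    using y_between[OF that] LH(2) by (intro IVT'_closed_segment_real[OF _ cont]) auto
  then obtain x where x: "\<And>k. 1 \<le> k \<Longrightarrow> k \<le> 4 \<Longrightarrow> x k \<in> closed_segment p q \<and> h (x k) = y k"
    by metis
  have same_sign: "0 < y j * y k" if "1 \<le> j" "j \<le> 4" "1 \<le> k" "k \<le> 4" for j k
    using y_between[of j] y_between[of k] that LH(3) by (auto intro: mult_pos_pos mult_neg_neg)
  have "y k \<noteq> 0" if "1 \<le> k" "k \<le> 4" for k
    using same_sign[OF that that] by auto
  moreover have "(y j)\<^sup>2 \<noteq> (y k)\<^sup>2" if "j \<noteq> k" "1 \<le> j" "j \<le> 4" "1 \<le> k" "k \<le> 4" for j k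
    using that LH(1) by (intro power2_neq_of_same_sign same_sign) (simp_all add: y_def)
  ultimately show ?thesis
    using x[of 1] x[of 2] x[of 3] x[of 4]
    by (intro exI[of _ "x 1"] exI[of _ "x 2"] exI[of _ "x 3"] exI[of _ "x 4"]) simp
qed

lemma DERIV_const_imp_affine:
  fixes h h' :: "real \<Rightarrow> real"
  assumes "\<And>x. (h has_real_derivative h' x) (at x)" and "\<And>x. (h' has_real_derivative 0) (at x)"
  shows "h x = h' 0 * x + h 0"
proof -
  have "h' y = h' 0" for y
    using assms(2) by (intro DERIV_isconst_all[of h']) blast
  then have "((\<lambda>x. h x - h' 0 * x) has_real_derivative 0) (at y)" for y
    using assms(1)[of y] by (auto intro!: derivative_eq_intros)
  then have "h x - h' 0 * x = h 0 - h' 0 * 0"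
    by (intro DERIV_isconst_all[of "\<lambda>x. h x - h' 0 * x"]) blast
  then show ?thesis by simp
qed

lemma smooth_fun_has_real_derivative:
  "smooth_fun f \<Longrightarrow> (f has_real_derivative deriv f x) (at x)"
  unfolding smooth_fun_def by (metis funpow_0 DERIV_deriv_iff_real_differentiable)

lemma smooth_fun_deriv: "smooth_fun f \<Longrightarrow> smooth_fun (deriv f)"
  unfolding smooth_fun_def by (metis funpow_Suc_right comp_apply)

lemma Omega_eq:
  "Omega a f g x z = f x * deriv (deriv g) (z + a * x)
     - (1 - (f x * deriv g (z + a * x))\<^sup>2) * (g (z + a * x) * deriv (deriv f) x
        + 2 * a * deriv f x * deriv g (z + a * x) + a\<^sup>2 * f x * deriv (deriv g) (z + a * x))"
  unfolding Omega_def Let_def by (simp add: algebra_simps power2_eq_square power3_eq_cube)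

lemma mean_curv_eq_0_iff:
  assumes "(f x * deriv g (z + a * x))\<^sup>2 < 1"
  shows "mean_curv a f g x z = 0 \<longleftrightarrow> Omega a f g x z = 0"
  using assms unfolding mean_curv_def by simp

locale minimal_factorable_surface =
  fixes a :: real and f f' f'' g g' g'' :: "real \<Rightarrow> real"
  assumes a_nonzero: "a \<noteq> 0"
    and f_deriv: "\<And>x. (f has_real_derivative f' x) (at x)"
    and f'_deriv: "\<And>x. (f' has_real_derivative f'' x) (at x)"
    and g_deriv: "\<And>v. (g has_real_derivative g' v) (at v)"
    and g'_deriv: "\<And>v. (g' has_real_derivative g'' v) (at v)"
    and g''_cont: "\<And>v. isCont g'' v"
    and regular: "\<And>x v. (f x * g' v)\<^sup>2 < 1"
    and minimal_eq: "\<And>x v. (1 - (f x * g' v)\<^sup>2) * (g v * f'' x + 2 * a * f' x * g' v + a\<^sup>2 * f x * g'' v)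
                        = f x * g'' v"
begin

lemma product_affine_in_x_if_g'_zero:
  assumes "\<And>v. g' v = 0"
  shows "\<exists>c b1 b0. \<forall>x v. f x * g v = c * (b1 * x + b0)"
proof -
  have g_const: "g v = g 0" for v
    using g_deriv assms by (intro DERIV_isconst_all[of g]) simp
  have "g'' v = 0" for v
    by (rule DERIV_local_const[OF g'_deriv zero_less_one]) (simp add: assms)
  then have g0_f'': "g 0 * f'' x = 0" for x
    using minimal_eq[of x 0] assms by simp
  show ?thesis
  proof (cases "g 0 = 0")
    case True
    then have "f x * g v = 0 * (0 * x + 0)" for x v
      using g_const[of v] by simp
    then show ?thesis by blast
  next
    case False
    then have "f'' x = 0" for x
      using g0_f'' by simp
    then have f_affine: "f x = f' 0 * x + f 0" for x
      using f_deriv f'_deriv by (intro DERIV_const_imp_affine[of f f']) simp_all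
    have "f x * g v = g 0 * (f' 0 * x + f 0)" for x v
      by (subst f_affine, subst g_const) (rule mult.commute)
    then show ?thesis by blast
  qed
qed

lemma product_affine_in_v_if_g''_zero:
  assumes g''_zero: "\<And>v. g'' v = 0" and "g' v0 \<noteq> 0"
  shows "\<exists>c b1 b0. \<forall>x v. f x * g v = c * (b1 * v + b0)"
proof -
  have "g' v = g' 0" for v
    using g'_deriv g''_zero by (intro DERIV_isconst_all[of g']) simp
  then have slope: "g' v = g' 0" "g' 0 \<noteq> 0" for v
    using assms(2) by metis+
  have g_affine: "g v = g' 0 * v + g 0" for v
    using g_deriv g'_deriv g''_zero by (intro DERIV_const_imp_affine[of g g']) simp_all
  have lin: "g v * f'' x + 2 * a * f' x * g' 0 = 0" for x v
  proof -
    have "1 - (f x * g' v)\<^sup>2 \<noteq> 0"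
      using regular[of x v] by simp
    then show ?thesis
      using minimal_eq[of x v] g''_zero[of v] slope(1)[of v] by simp
  qed
  have "f'' x = 0" for x
  proof -
    have "(g 1 - g 0) * f'' x
        = (g 1 * f'' x + 2 * a * f' x * g' 0) - (g 0 * f'' x + 2 * a * f' x * g' 0)"
      by (simp add: algebra_simps)
    also have "\<dots> = 0"
      using lin[of 1 x] lin[of 0 x] by simp
    finally show ?thesis
      using g_affine[of 1] slope(2) by simp
  qed
  then have "f' x = 0" for x
    using lin[of 0 x] slope(2) a_nonzero by simp
  then have "(f has_real_derivative 0) (at x)" for x
    using f_deriv[of x] by simp
  then have "f x = f 0" for x
    by (intro DERIV_isconst_all[of f]) blast
  then have "f x * g v = f 0 * (g' 0 * v + g 0)" for x v
    using g_affine[of v] by simp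
  then show ?thesis by blast
qed

lemma g''_nonzero_near:
  assumes "g'' v1 \<noteq> 0"
  obtains r where "r > 0" "\<And>v. \<bar>v - v1\<bar> < r \<Longrightarrow> g'' v \<noteq> 0"
proof -
  obtain r where r: "r > 0" "\<forall>y. dist v1 y < r \<longrightarrow> g'' y \<noteq> 0"
    using continuous_at_avoid[OF g''_cont assms] by blast
  show thesis
    by (rule that[OF r(1)]) (use r(2) in \<open>simp add: dist_real_def abs_minus_commute\<close>)
qed

lemma g''_zero_if_f_constant:
  assumes f_const: "\<And>x. f x = c" and "c \<noteq> 0"
  shows "g'' v1 = 0"
proof (rule ccontr)
  assume "g'' v1 \<noteq> 0"
  then obtain r where r: "r > 0" "\<And>v. \<bar>v - v1\<bar> < r \<Longrightarrow> g'' v \<noteq> 0"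
    using g''_nonzero_near by blast
  have f'_zero: "f' x = 0" for x
    by (rule DERIV_local_const[OF f_deriv zero_less_one]) (simp add: f_const)
  have f''_zero: "f'' x = 0" for x
    by (rule DERIV_local_const[OF f'_deriv zero_less_one]) (simp add: f'_zero)
  have level: "a\<^sup>2 * (1 - (c * g' v)\<^sup>2) = 1" if "\<bar>v - v1\<bar> < r" for v
  proof -
    have "(c * g'' v) * (a\<^sup>2 * (1 - (c * g' v)\<^sup>2)) = c * g'' v"
      using minimal_eq[of 0 v] by (simp add: f_const f'_zero f''_zero mult_ac)
    then show ?thesis
      using r(2)[OF that] \<open>c \<noteq> 0\<close> by simp
  qed
  have g'_zero: "g' v = 0" if v: "\<bar>v - v1\<bar> < r" for v
  proof -
    have der: "((\<lambda>w. a\<^sup>2 * (1 - (c * g' w)\<^sup>2)) has_real_derivative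
        a\<^sup>2 * (- (2 * c\<^sup>2 * g' v * g'' v))) (at v)"
      using g'_deriv[of v] by (auto intro!: derivative_eq_intros simp: power2_eq_square)
    have locally_const: "\<forall>y. \<bar>v - y\<bar> < r - \<bar>v - v1\<bar> \<longrightarrow>
        a\<^sup>2 * (1 - (c * g' v)\<^sup>2) = a\<^sup>2 * (1 - (c * g' y)\<^sup>2)"
    proof (intro allI impI)
      fix y
      assume "\<bar>v - y\<bar> < r - \<bar>v - v1\<bar>"
      then have "\<bar>y - v1\<bar> < r" by arith
      then show "a\<^sup>2 * (1 - (c * g' v)\<^sup>2) = a\<^sup>2 * (1 - (c * g' y)\<^sup>2)"
        using level level[OF v] by simp
    qed
    have "a\<^sup>2 * (- (2 * c\<^sup>2 * g' v * g'' v)) = 0"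
      using v by (intro DERIV_local_const[OF der _ locally_const]) simp
    then show ?thesis
      using a_nonzero \<open>c \<noteq> 0\<close> r(2)[OF v] by simp
  qed
  have "\<forall>y. \<bar>v1 - y\<bar> < r \<longrightarrow> g' v1 = g' y"
  proof (intro allI impI)
    fix y
    assume "\<bar>v1 - y\<bar> < r"
    then have "\<bar>y - v1\<bar> < r" by arith
    then show "g' v1 = g' y"
      using g'_zero[of y] g'_zero[of v1] r(1) by simp
  qed
  then have "g'' v1 = 0"
    by (rule DERIV_local_const[OF g'_deriv r(1)])
  with \<open>g'' v1 \<noteq> 0\<close> show False ..
qed

lemma fraction_as_combination:
  assumes "g'' w \<noteq> 0"
  shows "f x / (1 - (f x)\<^sup>2 * (g' w)\<^sup>2)
           = g w / g'' w * f'' x + 2 * a * g' w / g'' w * f' x + a\<^sup>2 * f x"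
proof -
  define D where "D = 1 - (f x)\<^sup>2 * (g' w)\<^sup>2"
  define Q where "Q = g w * f'' x + 2 * a * f' x * g' w + a\<^sup>2 * f x * g'' w"
  have "D \<noteq> 0"
    using regular[of x w] by (simp add: D_def power_mult_distrib)
  have "D * Q = f x * g'' w"
    using minimal_eq[of x w] by (simp add: D_def Q_def power_mult_distrib)
  have "g w / g'' w * f'' x + 2 * a * g' w / g'' w * f' x + a\<^sup>2 * f x = Q / g'' w"
    using assms by (simp add: Q_def field_simps)
  also have "\<dots> = f x / D"
    using \<open>D * Q = f x * g'' w\<close> \<open>D \<noteq> 0\<close> assms by (simp add: field_simps mult.commute)
  finally show ?thesis
    by (simp add: D_def)
qed

lemma g''_zero_if_f_nonconstant:
  assumes "f x0 \<noteq> f x1"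
  shows "g'' v1 = 0"
proof (rule ccontr)
  assume "g'' v1 \<noteq> 0"
  then obtain r where r: "r > 0" "\<And>v. \<bar>v - v1\<bar> < r \<Longrightarrow> g'' v \<noteq> 0"
    using g''_nonzero_near by blast
  have f_cont: "continuous_on S f" and g'_cont: "continuous_on S g'" for S
    using f_deriv g'_deriv by (meson DERIV_isCont continuous_at_imp_continuous_on)+
  define pv qv where "pv = v1 - r / 2" and "qv = v1 + r / 2"
  have near: "g'' v \<noteq> 0" if "v \<in> closed_segment pv qv" for v
    using that r by (intro r(2)) (auto simp: pv_def qv_def closed_segment_eq_real_ivl)
  have "pv < qv"
    using r(1) by (simp add: pv_def qv_def)
  then obtain z where z: "pv < z" "z < qv" "g' qv - g' pv = (qv - pv) * g'' z"
    using MVT2[of pv qv g' g''] g'_deriv by blast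
  moreover have "(qv - pv) * g'' z \<noteq> 0"
    using near[of z] z(1,2) by (simp add: closed_segment_eq_real_ivl)
  ultimately have "g' pv \<noteq> g' qv"
    by auto
  then obtain wa wb wc wd where w: "{wa, wb, wc, wd} \<subseteq> closed_segment pv qv"
    and w_distinct: "distinct [(g' wa)\<^sup>2, (g' wb)\<^sup>2, (g' wc)\<^sup>2, (g' wd)\<^sup>2]"
    using continuous_on_segment_distinct_squares[OF g'_cont] by blast
  obtain xa xb xc xd where
      f_nonzero: "f xa \<noteq> 0" "f xb \<noteq> 0" "f xc \<noteq> 0" "f xd \<noteq> 0"
    and f_distinct: "distinct [(f xa)\<^sup>2, (f xb)\<^sup>2, (f xc)\<^sup>2, (f xd)\<^sup>2]"
    using continuous_on_segment_distinct_squares[OF f_cont assms] by blast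
  obtain l1 l2 l3 l4 where l_nonzero: "l1 \<noteq> 0 \<or> l2 \<noteq> 0 \<or> l3 \<noteq> 0 \<or> l4 \<noteq> 0"
    and "l1 *\<^sub>R (f'' xa, f' xa, f xa) + l2 *\<^sub>R (f'' xb, f' xb, f xb)
       + l3 *\<^sub>R (f'' xc, f' xc, f xc) + l4 *\<^sub>R (f'' xd, f' xd, f xd) = 0"
    using four_vectors_dependent[of "(f'' xa, f' xa, f xa)" "(f'' xb, f' xb, f xb)"
        "(f'' xc, f' xc, f xc)" "(f'' xd, f' xd, f xd)"] by auto
  then have dep: "l1 * f'' xa + l2 * f'' xb + l3 * f'' xc + l4 * f'' xd = 0"
      "l1 * f' xa + l2 * f' xb + l3 * f' xc + l4 * f' xd = 0"
      "l1 * f xa + l2 * f xb + l3 * f xc + l4 * f xd = 0"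
    by (simp_all add: zero_prod_def)
  have key: "l1 * f xa / (1 - (f xa)\<^sup>2 * t) + l2 * f xb / (1 - (f xb)\<^sup>2 * t)
      + l3 * f xc / (1 - (f xc)\<^sup>2 * t) + l4 * f xd / (1 - (f xd)\<^sup>2 * t) = 0"
    if t_in: "t \<in> {(g' wa)\<^sup>2, (g' wb)\<^sup>2, (g' wc)\<^sup>2, (g' wd)\<^sup>2}" for t
  proof -
    obtain w where "w \<in> {wa, wb, wc, wd}" and t: "t = (g' w)\<^sup>2"
      using t_in by auto
    then have w_curved: "g'' w \<noteq> 0"
      using w by (intro near) blast
    define A B where "A = g w / g'' w" and "B = 2 * a * g' w / g'' w"
    have split_term: "l * f x / (1 - (f x)\<^sup>2 * t) = A * (l * f'' x) + B * (l * f' x) + a\<^sup>2 * (l * f x)"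
      for l x
      unfolding t times_divide_eq_right[symmetric] fraction_as_combination[OF w_curved]
      by (simp add: A_def B_def algebra_simps)
    have "l1 * f xa / (1 - (f xa)\<^sup>2 * t) + l2 * f xb / (1 - (f xb)\<^sup>2 * t)
        + l3 * f xc / (1 - (f xc)\<^sup>2 * t) + l4 * f xd / (1 - (f xd)\<^sup>2 * t)
        = A * (l1 * f'' xa + l2 * f'' xb + l3 * f'' xc + l4 * f'' xd)
          + B * (l1 * f' xa + l2 * f' xb + l3 * f' xc + l4 * f' xd)
          + a\<^sup>2 * (l1 * f xa + l2 * f xb + l3 * f xc + l4 * f xd)"
      unfolding split_term by (simp add: algebra_simps)
    then show ?thesis
      using dep by simp
  qed
  have "1 - (f x)\<^sup>2 * (g' w)\<^sup>2 \<noteq> 0" for x w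
    using regular[of x w] by (simp add: power_mult_distrib)
  then have denom: "1 - u * t \<noteq> 0"
    if "u \<in> {(f xa)\<^sup>2, (f xb)\<^sup>2, (f xc)\<^sup>2, (f xd)\<^sup>2}"
      and "t \<in> {(g' wa)\<^sup>2, (g' wb)\<^sup>2, (g' wc)\<^sup>2, (g' wd)\<^sup>2}" for u t
    using that by auto
  have "l1 * f xa = 0 \<and> l2 * f xb = 0 \<and> l3 * f xc = 0 \<and> l4 * f xd = 0"
    by (rule four_simple_fractions_independent[OF f_distinct _ _ _ _ w_distinct denom key])
      (use f_nonzero in simp_all)
  with f_nonzero l_nonzero show False by simp
qed

lemma g''_zero_if_f_nonzero:
  assumes "f x0 \<noteq> 0"
  shows "g'' v = 0"
proof (cases "\<forall>x. f x = f x0")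
  case True
  then show ?thesis
    using assms by (intro g''_zero_if_f_constant[of "f x0"]) simp_all
next
  case False
  then obtain x1 where "f x1 \<noteq> f x0"
    by auto
  then have "f x0 \<noteq> f x1"
    by (rule not_sym)
  then show ?thesis
    by (rule g''_zero_if_f_nonconstant)
qed

end

theorem mainTheorem2:
  fixes a :: real and f g :: "real \<Rightarrow> real"
  assumes a_nz: "a \<noteq> 0"
    and f_smooth: "smooth_fun f" and g_smooth: "smooth_fun g"
    and reg: "\<forall>x z. 1 - (f x * deriv g (z + a * x))\<^sup>2 > 0"
    and minimal: "\<forall>x z. mean_curv a f g x z = 0"
  shows
    "(\<exists>fo b1 b2. \<forall>x z. f x * g (z + a * x) = fo * (b1 * (z + a * x) + b2))
   \<or> (\<exists>fo b3. \<forall>x z. f x * g (z + a * x)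
          = fo * (sqrt ((a\<^sup>2 - 1) / (a\<^sup>2 * fo\<^sup>2)) * (z + a * x) + b3))
   \<or> (\<exists>go b4 b5. \<forall>x z. f x * g (z + a * x) = go * (b4 * x + b5))
   \<or> (\<exists>b6 b7 b8. \<forall>x z. f x * g (z + a * x) = b8 * (b6 * x + b7))
   \<or> (\<exists>b6 b7 b9 b10. \<forall>x z. f x * g (z + a * x)
          = (b6 * x + b7) * (b9 * (z + a * x) + b10))
   \<or> (\<exists>b11 b12 b13. \<forall>x z. f x * g (z + a * x)
          = (b12 * x + b13) * (b11 * (z + a * x) + b12))
   \<or> (\<exists>b11 b12. \<forall>x z. f x * g (z + a * x) = (1 / b11) * (b11 * (z + a * x) + b12))"
proof -
  have regular: "(f x * deriv g v)\<^sup>2 < 1" for x v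
    using reg[rule_format, of x "v - a * x"] by simp
  interpret minimal_factorable_surface a f "deriv f" "deriv (deriv f)" g "deriv g" "deriv (deriv g)"
  proof
    show "(f x * deriv g v)\<^sup>2 < 1" for x v
      by (fact regular)
    show "(1 - (f x * deriv g v)\<^sup>2) * (g v * deriv (deriv f) x + 2 * a * deriv f x * deriv g v
        + a\<^sup>2 * f x * deriv (deriv g) v) = f x * deriv (deriv g) v" for x v
      using minimal[rule_format, of x "v - a * x"] regular[of x v]
        mean_curv_eq_0_iff[where x = x and z = "v - a * x"] Omega_eq[where x = x and z = "v - a * x"]
      by simp
  qed (use a_nz f_smooth g_smooth in \<open>auto intro: smooth_fun_has_real_derivative
        smooth_fun_deriv DERIV_isCont\<close>)
  consider "\<forall>x. f x = 0" | "\<forall>v. deriv g v = 0" | v0 where "deriv g v0 \<noteq> 0" "\<forall>v. deriv (deriv g) v = 0"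
    using g''_zero_if_f_nonzero by blast
  then show ?thesis
  proof cases
    case 1
    then have "\<forall>x z. f x * g (z + a * x) = 0 * (0 * (z + a * x) + 0)"
      by simp
    then show ?thesis by blast
  next
    case 2
    then obtain c b1 b0 where "\<forall>x v. f x * g v = c * (b1 * x + b0)"
      using product_affine_in_x_if_g'_zero by blast
    then have "\<forall>x z. f x * g (z + a * x) = c * (b1 * x + b0)"
      by blast
    then show ?thesis by blast
  next
    case 3
    then obtain c b1 b0 where "\<forall>x v. f x * g v = c * (b1 * v + b0)"
      using product_affine_in_v_if_g''_zero by blast
    then have "\<forall>x z. f x * g (z + a * x) = c * (b1 * (z + a * x) + b0)"
      by blast
    then show ?thesis by blast
  qed
qed

end
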